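(* Let $\mathbb{K}$ be a field of characteristic different from $2$, let $d\ge 1$, and let $V,W$ be finite-dimensional $\mathbb{K}$-vector spaces with $\dim_{\mathbb K}V=N$ and $\dim_{\mathbb K}W=M$. Let $A(\xi):V\to W$, $\xi\in\mathbb{K}^d$, be a homogeneous symbol of degree $k$, i.e. in fixed bases $A(\xi)$ is an $M\times N$ matrix whose entries are homogeneous polynomials of degree $k$ in $\mathbb{K}[\xi_1,\dots,\xi_d]$; denote its columns by $a_1(\xi),\dots,a_N(\xi)\in W$. Assume that there is an integer $r\ge 0$ with $\operatorname{rank}_{\mathbb K}A(\xi)=r$ for all $\xi\in\mathbb{K}^d\setminus\{0\}$. Let $X:=\left(\bigwedge^{r+1}W\right)^{\binom{N}{r}}$ (with the convention $\binom{M}{M+1}=0$, so $X=\{0\}$ if $r=M$), and define $Q(\xi):W\to X$ by $$Q(\xi)(w):=\big(a_{i_1}(\xi)\wedge\cdots\wedge a_{i_r}(\xi)\wedge w\big)_{1\le i_1<\cdots<i_r\le N}.$$ Then $Q(\xi)$ is a homogeneous symbol on $\mathbb{K}^d$ such that: (1) if $r<\dim W$, the order (degree in $\xi$) of $Q(\xi)$ is $rk$; (2) if $r=M$, then $X=\{0\}$ and $Q(\xi)$ is the zero operator; (3) in either case, $\operatorname{im}A(\xi)=\ker Q(\xi)$ for all nonzero $\xi\in\mathbb{K}^d$.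
   Context: For a vector space $W$ and $r\le \dim W$, $\bigwedge^{r}W$ denotes the $r$-fold exterior power, spanned inside $W^{\otimes r}$ by $m_1\wedge\cdots\wedge m_r:=\sum_{\sigma\in S_r}\operatorname{sign}(\sigma)\,m_{\sigma(1)}\otimes\cdots\otimes m_{\sigma(r)}$. *)

theory Defs
  imports "Jordan_Normal_Form.DL_Rank" "HOL-Combinatorics.Permutations"
begin

(* A (formal) polynomial in d variables xi_0..xi_{d-1} over 'a is given by its
   coefficient function on exponent vectors alpha :: nat => nat.
   It is homogeneous of degree k if every monomial with nonzero coefficient
   only uses the variables 0..d-1 and has total degree k (this also forces
   finite support). *)
definition hom_poly :: "nat \<Rightarrow> nat \<Rightarrow> ((nat \<Rightarrow> nat) \<Rightarrow> 'a::field) \<Rightarrow> bool" where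
  "hom_poly d k c \<longleftrightarrow>
     (\<forall>\<alpha>. c \<alpha> \<noteq> 0 \<longrightarrow> (\<forall>i\<ge>d. \<alpha> i = 0) \<and> sum \<alpha> {..<d} = k)"

definition poly_eval :: "nat \<Rightarrow> ((nat \<Rightarrow> nat) \<Rightarrow> 'a::field) \<Rightarrow> 'a vec \<Rightarrow> 'a" where
  "poly_eval d c \<xi> = (\<Sum>\<alpha> \<in> {\<alpha>. c \<alpha> \<noteq> 0}. c \<alpha> * (\<Prod>i<d. (\<xi> $ i) ^ \<alpha> i))"

definition hom_symbol :: "nat \<Rightarrow> nat \<Rightarrow> nat \<Rightarrow> nat \<Rightarrow> ('a::field vec \<Rightarrow> 'a mat) \<Rightarrow> bool" where
  "hom_symbol d k M N S \<longleftrightarrow>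
     (\<exists>P. (\<forall>i j. hom_poly d k (P i j)) \<and>
          (\<forall>\<xi>\<in>carrier_vec d. S \<xi> = mat M N (\<lambda>(i,j). poly_eval d (P i j) \<xi>)))"

(* Tensors of order m over W = K^M are functions of the index tuple
   idx :: nat => nat (only idx 0 .. idx (m-1) matter). *)
definition wedge :: "'a::field vec list \<Rightarrow> (nat \<Rightarrow> nat) \<Rightarrow> 'a" where
  "wedge vs = (\<lambda>idx. \<Sum>\<sigma> \<in> {\<sigma>. \<sigma> permutes {..<length vs}}.
       of_int (sign \<sigma>) * (\<Prod>j<length vs. (vs ! (\<sigma> j)) $ (idx j)))"

(* Components of X are indexed by r-element subsets I = {i_1 < ... < i_r} of {0..<N};
   each component is an (r+1)-tensor over K^M, represented on the valid index tuples
   (idx j < M for j <= r, idx j = 0 beyond) and extended by 0 elsewhere. *)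
definition Qop :: "nat \<Rightarrow> nat \<Rightarrow> nat \<Rightarrow> ('a::field vec \<Rightarrow> 'a mat) \<Rightarrow> 'a vec \<Rightarrow> 'a vec
                   \<Rightarrow> nat set \<Rightarrow> (nat \<Rightarrow> nat) \<Rightarrow> 'a" where
  "Qop M N r A \<xi> w = (\<lambda>I idx.
     if I \<subseteq> {..<N} \<and> card I = r \<and> (\<forall>j\<le>r. idx j < M) \<and> (\<forall>j>r. idx j = 0)
     then wedge (map (\<lambda>i. col (A \<xi>) i) (sorted_list_of_set I) @ [w]) idx
     else 0)"

definition hom_symbol_X :: "nat \<Rightarrow> nat \<Rightarrow> nat
      \<Rightarrow> ('a::field vec \<Rightarrow> 'a vec \<Rightarrow> nat set \<Rightarrow> (nat \<Rightarrow> nat) \<Rightarrow> 'a) \<Rightarrow> bool" where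
  "hom_symbol_X d k M Q \<longleftrightarrow>
     (\<exists>P. (\<forall>I idx j. hom_poly d k (P I idx j)) \<and>
          (\<forall>\<xi>\<in>carrier_vec d. \<forall>w\<in>carrier_vec M. \<forall>I idx.
              Q \<xi> w I idx = (\<Sum>j<M. poly_eval d (P I idx j) \<xi> * w $ j)))"

end

theory Submission
  imports Defs
begin

text \<open>
  Write \<open>a\<^sub>I(\<xi>)\<close> for the columns of \<open>A(\<xi>)\<close> with indices in \<open>I\<close>. The component of
  \<open>Q(\<xi>)w\<close> at \<open>(I, idx)\<close> is the minor on the rows \<open>idx\<close> of the matrix \<open>[a\<^sub>I(\<xi>) | w]\<close>.
  Expanding it along the column \<open>w\<close> shows that \<open>Q(\<xi>)w\<close> is linear in \<open>w\<close> with coefficients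
  that are \<open>r \<times> r\<close> minors of \<open>A(\<xi>)\<close>, hence homogeneous of degree \<open>r k\<close>.
  For \<open>\<xi> \<noteq> 0\<close> the image of \<open>A(\<xi>)\<close> has dimension \<open>r\<close>: if \<open>w\<close> lies in it, the \<open>r + 1\<close>
  vectors \<open>a\<^sub>I(\<xi>), w\<close> are dependent and all their maximal minors vanish; if not, then \<open>r\<close>
  independent columns together with \<open>w\<close> are independent, and an independent family always
  has a nonzero maximal minor. For \<open>r = M\<close> every \<open>(M + 1)\<close>-minor of vectors in \<open>K\<^sup>M\<close> has
  a repeated row.
\<close>

definition hom_poly_fun :: "nat \<Rightarrow> nat \<Rightarrow> ('a::field vec \<Rightarrow> 'a) \<Rightarrow> bool" where
  "hom_poly_fun d k f \<longleftrightarrow> (\<exists>c. hom_poly d k c \<and> (\<forall>\<xi>\<in>carrier_vec d. f \<xi> = poly_eval d c \<xi>))"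

definition monom_eval :: "nat \<Rightarrow> (nat \<Rightarrow> nat) \<Rightarrow> 'a::field vec \<Rightarrow> 'a" where
  "monom_eval d \<alpha> \<xi> = (\<Prod>i<d. (\<xi> $ i) ^ \<alpha> i)"

lemma hom_poly_finite_support:
  assumes "hom_poly d k c"
  shows "finite {\<alpha>. c \<alpha> \<noteq> 0}"
proof (rule finite_subset)
  show "{\<alpha>. c \<alpha> \<noteq> 0} \<subseteq> {\<alpha>. \<forall>i. (i \<in> {..<d} \<longrightarrow> \<alpha> i \<in> {..k}) \<and> (i \<notin> {..<d} \<longrightarrow> \<alpha> i = 0)}"
  proof
    fix \<alpha> assume "\<alpha> \<in> {\<alpha>. c \<alpha> \<noteq> 0}"
    then have "\<forall>i\<ge>d. \<alpha> i = 0" "sum \<alpha> {..<d} = k" using assms unfolding hom_poly_def by auto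
    then show "\<alpha> \<in> {\<alpha>. \<forall>i. (i \<in> {..<d} \<longrightarrow> \<alpha> i \<in> {..k}) \<and> (i \<notin> {..<d} \<longrightarrow> \<alpha> i = 0)}"
      using member_le_sum[of _ "{..<d}" \<alpha>] by auto
  qed
  show "finite {\<alpha>. \<forall>i. (i \<in> {..<d} \<longrightarrow> \<alpha> i \<in> {..k}) \<and> (i \<notin> {..<d} \<longrightarrow> \<alpha> i = (0::nat))}"
    by (rule finite_set_of_finite_funs) auto
qed

lemma poly_eval_eq_sum_superset:
  assumes "finite T" "{\<alpha>. c \<alpha> \<noteq> 0} \<subseteq> T"
  shows "poly_eval d c \<xi> = (\<Sum>\<alpha>\<in>T. c \<alpha> * monom_eval d \<alpha> \<xi>)"
  unfolding poly_eval_def monom_eval_def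
  by (rule sum.mono_neutral_right[symmetric]) (use assms in auto)

lemma hom_poly_fun_cong:
  "hom_poly_fun d k f \<Longrightarrow> (\<And>\<xi>. \<xi> \<in> carrier_vec d \<Longrightarrow> f \<xi> = g \<xi>) \<Longrightarrow> hom_poly_fun d k g"
  unfolding hom_poly_fun_def by metis

lemma hom_poly_fun_zero: "hom_poly_fun d k (\<lambda>\<xi>. 0)"
  unfolding hom_poly_fun_def hom_poly_def poly_eval_def
  by (rule exI[of _ "\<lambda>_. 0"]) auto

lemma hom_poly_fun_monom:
  assumes "\<forall>i\<ge>d. \<alpha> i = 0"
  shows "hom_poly_fun d (sum \<alpha> {..<d}) (monom_eval d \<alpha>)"
  unfolding hom_poly_fun_def
proof (intro exI conjI ballI)
  let ?c = "\<lambda>\<beta>. if \<beta> = \<alpha> then 1 else 0 :: 'a"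
  show "hom_poly d (sum \<alpha> {..<d}) ?c"
    using assms unfolding hom_poly_def by simp
  have "{\<beta>. ?c \<beta> \<noteq> 0} = {\<alpha>}" by auto
  then show "monom_eval d \<alpha> \<xi> = poly_eval d ?c \<xi>" for \<xi>
    unfolding poly_eval_def monom_eval_def by simp
qed

lemma hom_poly_fun_add:
  assumes "hom_poly_fun d k f" "hom_poly_fun d k g"
  shows "hom_poly_fun d k (\<lambda>\<xi>. f \<xi> + g \<xi>)"
proof -
  obtain c1 c2 where c: "hom_poly d k c1" "\<forall>\<xi>\<in>carrier_vec d. f \<xi> = poly_eval d c1 \<xi>"
     "hom_poly d k c2" "\<forall>\<xi>\<in>carrier_vec d. g \<xi> = poly_eval d c2 \<xi>"
    using assms unfolding hom_poly_fun_def by blast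
  let ?T = "{\<alpha>. c1 \<alpha> \<noteq> 0} \<union> {\<alpha>. c2 \<alpha> \<noteq> 0}"
  have T: "finite ?T" using hom_poly_finite_support c(1,3) by blast
  show ?thesis unfolding hom_poly_fun_def
  proof (intro exI conjI ballI)
    show "hom_poly d k (\<lambda>\<alpha>. c1 \<alpha> + c2 \<alpha>)"
      using c(1,3) unfolding hom_poly_def by (metis add_0)
    fix \<xi> :: "'a vec" assume "\<xi> \<in> carrier_vec d"
    then have "f \<xi> + g \<xi> = poly_eval d c1 \<xi> + poly_eval d c2 \<xi>" using c(2,4) by simp
    also have "\<dots> = poly_eval d (\<lambda>\<alpha>. c1 \<alpha> + c2 \<alpha>) \<xi>"
      by (subst (1 2 3) poly_eval_eq_sum_superset[OF T]) (auto simp: sum.distrib algebra_simps)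
    finally show "f \<xi> + g \<xi> = poly_eval d (\<lambda>\<alpha>. c1 \<alpha> + c2 \<alpha>) \<xi>" .
  qed
qed

lemma hom_poly_fun_cmult:
  assumes "hom_poly_fun d k f"
  shows "hom_poly_fun d k (\<lambda>\<xi>. a * f \<xi>)"
proof -
  obtain c where c: "hom_poly d k c" "\<forall>\<xi>\<in>carrier_vec d. f \<xi> = poly_eval d c \<xi>"
    using assms unfolding hom_poly_fun_def by blast
  have T: "finite {\<alpha>. c \<alpha> \<noteq> 0}" using hom_poly_finite_support c(1) by blast
  show ?thesis unfolding hom_poly_fun_def
  proof (intro exI conjI ballI)
    show "hom_poly d k (\<lambda>\<alpha>. a * c \<alpha>)" using c(1) unfolding hom_poly_def by auto
    fix \<xi> :: "'a vec" assume "\<xi> \<in> carrier_vec d"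
    then have "a * f \<xi> = a * poly_eval d c \<xi>" using c(2) by simp
    also have "\<dots> = poly_eval d (\<lambda>\<alpha>. a * c \<alpha>) \<xi>"
      by (subst (1 2) poly_eval_eq_sum_superset[OF T]) (auto simp: sum_distrib_left mult.assoc)
    finally show "a * f \<xi> = poly_eval d (\<lambda>\<alpha>. a * c \<alpha>) \<xi>" .
  qed
qed

lemma hom_poly_fun_sum:
  assumes "finite S" "\<And>x. x \<in> S \<Longrightarrow> hom_poly_fun d k (f x)"
  shows "hom_poly_fun d k (\<lambda>\<xi>. \<Sum>x\<in>S. f x \<xi>)"
  using assms by (induction S rule: finite_induct) (auto intro: hom_poly_fun_zero hom_poly_fun_add)

lemma hom_poly_fun_mult:
  assumes "hom_poly_fun d a f" "hom_poly_fun d b g"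
  shows "hom_poly_fun d (a + b) (\<lambda>\<xi>. f \<xi> * g \<xi>)"
proof -
  obtain c1 c2 where c: "hom_poly d a c1" "\<forall>\<xi>\<in>carrier_vec d. f \<xi> = poly_eval d c1 \<xi>"
     "hom_poly d b c2" "\<forall>\<xi>\<in>carrier_vec d. g \<xi> = poly_eval d c2 \<xi>"
    using assms unfolding hom_poly_fun_def by blast
  let ?S1 = "{\<alpha>. c1 \<alpha> \<noteq> 0}" and ?S2 = "{\<alpha>. c2 \<alpha> \<noteq> 0}"
  have "hom_poly_fun d (a + b) (\<lambda>\<xi>. c1 \<alpha> * c2 \<beta> * monom_eval d (\<lambda>i. \<alpha> i + \<beta> i) \<xi>)"
    if "\<alpha> \<in> ?S1" "\<beta> \<in> ?S2" for \<alpha> \<beta>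
  proof -
    have "(\<forall>i\<ge>d. \<alpha> i = 0) \<and> sum \<alpha> {..<d} = a" "(\<forall>i\<ge>d. \<beta> i = 0) \<and> sum \<beta> {..<d} = b"
      using c(1,3) that unfolding hom_poly_def by auto
    then show ?thesis
      using hom_poly_fun_monom[of d "\<lambda>i. \<alpha> i + \<beta> i"] by (auto simp: sum.distrib intro: hom_poly_fun_cmult)
  qed
  then have sum_hom: "hom_poly_fun d (a + b)
      (\<lambda>\<xi>. \<Sum>\<alpha>\<in>?S1. \<Sum>\<beta>\<in>?S2. c1 \<alpha> * c2 \<beta> * monom_eval d (\<lambda>i. \<alpha> i + \<beta> i) \<xi>)"
    using hom_poly_finite_support c(1,3) by (intro hom_poly_fun_sum) auto
  have eq: "(\<Sum>\<alpha>\<in>?S1. \<Sum>\<beta>\<in>?S2. c1 \<alpha> * c2 \<beta> * monom_eval d (\<lambda>i. \<alpha> i + \<beta> i) \<xi>)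
      = poly_eval d c1 \<xi> * poly_eval d c2 \<xi>" for \<xi>
    unfolding poly_eval_def monom_eval_def sum_product
    by (simp add: power_add prod.distrib algebra_simps)
  show ?thesis
    by (rule hom_poly_fun_cong[OF sum_hom]) (use c(2,4) eq in simp)
qed

lemma hom_poly_fun_prod:
  assumes "finite S" "\<And>x. x \<in> S \<Longrightarrow> hom_poly_fun d k (f x)"
  shows "hom_poly_fun d (card S * k) (\<lambda>\<xi>. \<Prod>x\<in>S. f x \<xi>)"
  using assms
proof (induction S rule: finite_induct)
  case empty
  show ?case using hom_poly_fun_monom[of d "\<lambda>_. 0"] by (simp add: monom_eval_def[abs_def])
next
  case (insert x F)
  then show ?case using hom_poly_fun_mult[of d k "f x" "card F * k"] by simp
qed

lemma hom_poly_fun_col_entry: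
  assumes "hom_symbol d k M N A" "i < M" "j < N"
  shows "hom_poly_fun d k (\<lambda>\<xi>. col (A \<xi>) j $ i)"
proof -
  obtain P where "\<forall>i j. hom_poly d k (P i j)"
      "\<forall>\<xi>\<in>carrier_vec d. A \<xi> = mat M N (\<lambda>(i, j). poly_eval d (P i j) \<xi>)"
    using assms(1) unfolding hom_symbol_def by blast
  then show ?thesis unfolding hom_poly_fun_def using assms(2,3) by (intro exI[of _ "P i j"]) simp
qed

lemma hom_symbol_XI:
  assumes "\<And>I idx m. hom_poly_fun d k (F I idx m)"
    and "\<And>\<xi> w I idx. \<xi> \<in> carrier_vec d \<Longrightarrow> w \<in> carrier_vec M \<Longrightarrow>
           Q \<xi> w I idx = (\<Sum>m<M. F I idx m \<xi> * w $ m)"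
  shows "hom_symbol_X d k M Q"
proof -
  have "\<forall>I idx m. \<exists>c. hom_poly d k c \<and> (\<forall>\<xi>\<in>carrier_vec d. F I idx m \<xi> = poly_eval d c \<xi>)"
    using assms(1) unfolding hom_poly_fun_def by blast
  then obtain P where "\<forall>I idx m. hom_poly d k (P I idx m)
      \<and> (\<forall>\<xi>\<in>carrier_vec d. F I idx m \<xi> = poly_eval d (P I idx m) \<xi>)"
    by metis
  then show ?thesis unfolding hom_symbol_X_def using assms(2) by (intro exI[of _ P]) simp
qed

definition wedge_mat :: "'a::field vec list \<Rightarrow> (nat \<Rightarrow> nat) \<Rightarrow> 'a mat" where
  "wedge_mat vs idx = mat (length vs) (length vs) (\<lambda>(j, l). vs ! l $ idx j)"

lemma wedge_mat_carrier: "wedge_mat vs idx \<in> carrier_mat (length vs) (length vs)"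
  unfolding wedge_mat_def by simp

lemma wedge_eq_det: "wedge vs idx = det (wedge_mat vs idx)"
  unfolding wedge_def det_def wedge_mat_def by (simp add: atLeast0LessThan)

lemma wedge_cong: "(\<And>j. j < length vs \<Longrightarrow> idx j = idx' j) \<Longrightarrow> wedge vs idx = wedge vs idx'"
  unfolding wedge_eq_det wedge_mat_def by (intro arg_cong[where f = det] eq_matI) auto

lemma hom_poly_fun_wedge:
  assumes len: "\<And>\<xi>. length (vs \<xi>) = n"
    and entries: "\<And>l j. l < n \<Longrightarrow> j < n \<Longrightarrow> hom_poly_fun d k (\<lambda>\<xi>. vs \<xi> ! l $ idx j)"
  shows "hom_poly_fun d (n * k) (\<lambda>\<xi>. wedge (vs \<xi>) idx)"
proof -
  have "hom_poly_fun d (n * k) (\<lambda>\<xi>. \<Prod>j<n. vs \<xi> ! \<sigma> j $ idx j)" if "\<sigma> permutes {..<n}" for \<sigma>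
    using hom_poly_fun_prod[of "{..<n}" d k "\<lambda>j \<xi>. vs \<xi> ! \<sigma> j $ idx j"]
      entries permutes_in_image[OF that] by simp
  then have "hom_poly_fun d (n * k)
      (\<lambda>\<xi>. \<Sum>\<sigma>\<in>{\<sigma>. \<sigma> permutes {..<n}}. of_int (sign \<sigma>) * (\<Prod>j<n. vs \<xi> ! \<sigma> j $ idx j))"
    by (intro hom_poly_fun_sum hom_poly_fun_cmult) (auto simp: finite_permutations)
  then show ?thesis unfolding wedge_def len .
qed

lemma wedge_append_expansion:
  "wedge (us @ [w]) idx =
     (\<Sum>j\<le>length us. (-1) ^ (j + length us) * w $ idx j * wedge us (idx \<circ> insert_index j))"
proof -
  let ?r = "length us" and ?D = "wedge_mat (us @ [w]) idx"
  have D: "?D \<in> carrier_mat (Suc ?r) (Suc ?r)" using wedge_mat_carrier[of "us @ [w]"] by simp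
  have "mat_delete ?D j ?r = wedge_mat us (idx \<circ> insert_index j)" for j
    unfolding mat_delete_def wedge_mat_def by (rule eq_matI) (auto simp: nth_append insert_index_def)
  moreover have "?D $$ (j, ?r) = w $ idx j" if "j \<le> ?r" for j
    using that by (simp add: wedge_mat_def)
  ultimately show ?thesis
    unfolding wedge_eq_det laplace_expansion_column[OF D lessI] cofactor_def lessThan_Suc_atMost
    by (intro sum.cong) auto
qed

lemma wedge_append_linear:
  assumes "\<forall>j\<le>length us. idx j < M"
  shows "wedge (us @ [w]) idx = (\<Sum>m<M. (\<Sum>j\<in>{j\<in>{..length us}. idx j = m}.
            (-1) ^ (j + length us) * wedge us (idx \<circ> insert_index j)) * w $ m)"
proof -
  have "(\<Sum>m<M. \<Sum>j\<in>{j\<in>{..length us}. idx j = m}.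
          (-1) ^ (j + length us) * w $ idx j * wedge us (idx \<circ> insert_index j))
      = (\<Sum>j\<le>length us. (-1) ^ (j + length us) * w $ idx j * wedge us (idx \<circ> insert_index j))"
    by (rule sum.group) (use assms in auto)
  then show ?thesis
    unfolding wedge_append_expansion sum_distrib_right
    by (auto intro!: sum.cong simp: algebra_simps)
qed

lemma wedge_eq_0_if_not_inj:
  assumes "\<not> inj_on idx {..<length vs}"
  shows "wedge vs idx = 0"
proof -
  obtain i j where ij: "i < length vs" "j < length vs" "i \<noteq> j" "idx i = idx j"
    using assms unfolding inj_on_def by auto
  have "row (wedge_mat vs idx) i = row (wedge_mat vs idx) j"
    using ij by (intro eq_vecI) (auto simp: wedge_mat_def)
  then show ?thesis
    unfolding wedge_eq_det using det_identical_rows[OF wedge_mat_carrier ij(3,1,2)] by blast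
qed

lemma wedge_eq_0_if_length_gt_dim:
  assumes "M < length vs" "\<forall>j<length vs. idx j < M"
  shows "wedge vs idx = 0"
proof (rule wedge_eq_0_if_not_inj)
  show "\<not> inj_on idx {..<length vs}"
  proof
    assume "inj_on idx {..<length vs}"
    then have "card {..<length vs} \<le> card {..<M}"
      using assms(2) by (intro card_inj_on_le) auto
    then show False using assms(1) by simp
  qed
qed

lemma mat_of_cols_mult_vec_index:
  assumes "i < n" "c \<in> carrier_vec (length vs)"
  shows "(mat_of_cols n vs *\<^sub>v c) $ i = (\<Sum>j<length vs. vs ! j $ i * c $ j)"
  using assms by (simp add: scalar_prod_def mat_of_cols_index atLeast0LessThan)

lemma wedge_mat_mult_vec:
  assumes "\<forall>j<length vs. idx j < n" "c \<in> carrier_vec (length vs)"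
  shows "wedge_mat vs idx *\<^sub>v c = vec (length vs) (\<lambda>j. (mat_of_cols n vs *\<^sub>v c) $ idx j)"
  using assms
  by (intro eq_vecI) (auto simp: wedge_mat_def scalar_prod_def mat_of_cols_index atLeast0LessThan)

lemma wedge_eq_0_if_cols_dependent:
  assumes "c \<in> carrier_vec (length vs)" "c \<noteq> 0\<^sub>v (length vs)" "mat_of_cols n vs *\<^sub>v c = 0\<^sub>v n"
    and "\<forall>j<length vs. idx j < n"
  shows "wedge vs idx = 0"
proof -
  have "wedge_mat vs idx *\<^sub>v c = 0\<^sub>v (length vs)"
    using assms by (subst wedge_mat_mult_vec[of vs idx n]) (auto intro!: eq_vecI)
  then show ?thesis
    unfolding wedge_eq_det det_0_iff_vec_prod_zero_field[OF wedge_mat_carrier] using assms(1,2) by blast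
qed

lemma wedge_expand_last_row:
  assumes "length vs = Suc r"
  shows "wedge vs (idx(r := t)) = (\<Sum>m\<le>r. vs ! m $ t * cofactor (wedge_mat vs idx) r m)"
proof -
  let ?D = "wedge_mat vs (idx(r := t))"
  have D: "?D \<in> carrier_mat (Suc r) (Suc r)" using wedge_mat_carrier[of vs] assms by simp
  have "mat_delete ?D r m = mat_delete (wedge_mat vs idx) r m" for m
    unfolding mat_delete_def wedge_mat_def by (rule eq_matI) auto
  moreover have "?D $$ (r, m) = vs ! m $ t" if "m \<le> r" for m
    using that assms by (simp add: wedge_mat_def)
  ultimately show ?thesis
    unfolding wedge_eq_det laplace_expansion_row[OF D lessI] cofactor_def lessThan_Suc_atMost
    by (intro sum.cong) auto
qed

lemma cofactor_wedge_mat_last: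
  "cofactor (wedge_mat (us @ [w]) idx) (length us) (length us) = wedge us idx"
proof -
  have "mat_delete (wedge_mat (us @ [w]) idx) (length us) (length us) = wedge_mat us idx"
    unfolding mat_delete_def wedge_mat_def by (rule eq_matI) (auto simp: nth_append)
  then show ?thesis unfolding cofactor_def wedge_eq_det by (simp flip: mult_2)
qed

lemma wedge_ne_0_if_cols_independent:
  assumes "\<And>c. c \<in> carrier_vec (length vs) \<Longrightarrow> mat_of_cols n vs *\<^sub>v c = 0\<^sub>v n \<Longrightarrow> c = 0\<^sub>v (length vs)"
  shows "\<exists>idx. (\<forall>j<length vs. idx j < n) \<and> wedge vs idx \<noteq> 0"
  using assms
proof (induction vs rule: rev_induct)
  case Nil
  show ?case by (simp add: wedge_def)
next
  case (snoc w us)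
  let ?r = "length us" and ?U = "mat_of_cols n (us @ [w])"
  have "c = 0\<^sub>v ?r" if c: "c \<in> carrier_vec ?r" "mat_of_cols n us *\<^sub>v c = 0\<^sub>v n" for c
  proof -
    define c' where "c' = vec (Suc ?r) (\<lambda>j. if j < ?r then c $ j else 0)"
    have "(?U *\<^sub>v c') $ i = (mat_of_cols n us *\<^sub>v c) $ i" if "i < n" for i
      using that c(1) by (simp add: mat_of_cols_mult_vec_index c'_def nth_append del: index_mult_mat_vec)
    then have "?U *\<^sub>v c' = 0\<^sub>v n" using c(2) by (intro eq_vecI) auto
    then have "c' = 0\<^sub>v (Suc ?r)" using snoc.prems[of c'] by (simp add: c'_def)
    moreover have "c $ i = c' $ i" if "i < ?r" for i using that by (simp add: c'_def)
    ultimately show ?thesis using c(1) by (intro eq_vecI) auto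
  qed
  then obtain \<rho> where \<rho>: "\<forall>j<?r. \<rho> j < n" "wedge us \<rho> \<noteq> 0"
    using snoc.IH by blast
  txt \<open>By expansion along the last row, the minors with last row index \<open>t\<close> are the entries
    of \<open>?U *\<^sub>v cof\<close>; the last entry of \<open>cof\<close> is the minor given by the induction hypothesis.\<close>
  define cof where "cof = vec (Suc ?r) (\<lambda>m. cofactor (wedge_mat (us @ [w]) \<rho>) ?r m)"
  have "cof $ ?r \<noteq> 0" using \<rho>(2) by (simp add: cof_def cofactor_wedge_mat_last)
  then have "cof \<noteq> 0\<^sub>v (Suc ?r)" by auto
  then have "?U *\<^sub>v cof \<noteq> 0\<^sub>v n" using snoc.prems[of cof] by (auto simp: cof_def)
  then obtain t where t: "t < n" "(?U *\<^sub>v cof) $ t \<noteq> 0"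
    by (metis dim_mult_mat_vec eq_vecI index_zero_vec mat_of_cols_carrier(2))
  have "(?U *\<^sub>v cof) $ t = wedge (us @ [w]) (\<rho>(?r := t))"
    using t(1) by (simp add: mat_of_cols_mult_vec_index wedge_expand_last_row cof_def
        lessThan_Suc_atMost mult.commute del: index_mult_mat_vec)
  moreover have "\<forall>j<length (us @ [w]). (\<rho>(?r := t)) j < n" using t(1) \<rho>(1) by (simp add: less_Suc_eq)
  ultimately show ?case using t(2) by metis
qed

lemma hom_symbol_X_Qop:
  assumes A: "hom_symbol d k M N A"
  shows "hom_symbol_X d (r * k) M (Qop M N r A)"
proof -
  define admissible where "admissible I idx \<longleftrightarrow>
    I \<subseteq> {..<N} \<and> card I = r \<and> (\<forall>j\<le>r. idx j < M) \<and> (\<forall>j>r. idx j = 0)" for I idx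
  define cols_of where "cols_of I \<xi> = map (\<lambda>i. col (A \<xi>) i) (sorted_list_of_set I)" for I \<xi>
  define F where "F I idx m \<xi> = (if admissible I idx
      then \<Sum>j\<in>{j\<in>{..r}. idx j = m}. (-1) ^ (j + r) * wedge (cols_of I \<xi>) (idx \<circ> insert_index j)
      else 0)" for I idx m \<xi>
  have len: "length (cols_of I \<xi>) = r" if "admissible I idx" for I idx \<xi>
    using that unfolding admissible_def cols_of_def by simp
  show ?thesis
  proof (rule hom_symbol_XI[where F = F])
    fix \<xi> w I idx
    have Qop_eq: "Qop M N r A \<xi> w I idx = (if admissible I idx then wedge (cols_of I \<xi> @ [w]) idx else 0)"
      unfolding Qop_def admissible_def cols_of_def ..
    show "Qop M N r A \<xi> w I idx = (\<Sum>m<M. F I idx m \<xi> * w $ m)"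
    proof (cases "admissible I idx")
      case True
      then show ?thesis
        unfolding Qop_eq F_def using wedge_append_linear[of "cols_of I \<xi>" idx M w] len[OF True]
        by (simp add: admissible_def)
    qed (simp add: Qop_eq F_def)
  next
    show "hom_poly_fun d (r * k) (F I idx m)" for I idx m
    proof (cases "admissible I idx")
      case True
      then have I: "finite I" "I \<subseteq> {..<N}" "card I = r" and idx: "\<forall>j\<le>r. idx j < M"
        unfolding admissible_def using finite_subset by auto
      have "hom_poly_fun d (r * k) (\<lambda>\<xi>. wedge (cols_of I \<xi>) (idx \<circ> insert_index j))"
        if "j \<le> r" for j
      proof (rule hom_poly_fun_wedge)
        show "length (cols_of I \<xi>) = r" for \<xi> using len[OF True] .
        fix l a assume "l < r" "a < r"
        then have "sorted_list_of_set I ! l < N" "idx (insert_index j a) < M"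
          using I idx nth_mem[of l "sorted_list_of_set I"]
          by (auto simp: insert_index_def)
        then show "hom_poly_fun d k (\<lambda>\<xi>. cols_of I \<xi> ! l $ (idx \<circ> insert_index j) a)"
          using hom_poly_fun_col_entry[OF A] \<open>l < r\<close> I
          by (simp add: cols_of_def)
      qed
      then show ?thesis
        unfolding F_def using True by (auto intro!: hom_poly_fun_sum hom_poly_fun_cmult)
    qed (simp add: F_def[abs_def] hom_poly_fun_zero)
  qed
qed

lemma Qop_eq_0_if_rank_eq_dim: "Qop M N M A \<xi> w = (\<lambda>I idx. 0)"
proof (intro ext)
  fix I idx
  have "wedge (map (\<lambda>i. col (A \<xi>) i) (sorted_list_of_set I) @ [w]) idx = 0"
    if "card I = M" "\<forall>j\<le>M. idx j < M"
    using that by (intro wedge_eq_0_if_length_gt_dim) (auto simp: less_Suc_eq_le)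
  then show "Qop M N M A \<xi> w I idx = 0" unfolding Qop_def by auto
qed

context vec_space
begin

lemma col_space_basis_of_cols:
  assumes B: "B \<in> carrier_mat n nc"
  obtains I where "I \<subseteq> {..<nc}" "card I = rank B" "inj_on (col B) I"
    "lin_indpt (col B ` I)" "span (col B ` I) = col_space B"
proof -
  have cols: "set (cols B) \<subseteq> carrier_vec n" using B cols_dim by blast
  obtain S where S: "maximal S (\<lambda>T. T \<subseteq> set (cols B) \<and> lin_indpt T)"
    using maximal_exists[of "\<lambda>T. T \<subseteq> set (cols B) \<and> lin_indpt T" "card (set (cols B))" "{}"]
    by (meson List.finite_set card_mono empty_iff empty_subsetI finite_lin_indpt2 rev_finite_subset)
  then have S_cols: "S \<subseteq> set (cols B)" and S_indpt: "lin_indpt S" unfolding maximal_def by auto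
  have S_carrier: "S \<subseteq> carrier_vec n" using S_cols cols by auto
  have "v \<in> span S" if v: "v \<in> set (cols B)" for v
  proof (rule ccontr)
    assume "v \<notin> span S"
    then have "v \<notin> S" "lin_indpt (S \<union> {v})"
      using in_own_span[OF S_carrier] lin_dep_iff_in_span[OF S_carrier S_indpt] v cols by auto
    then show False using S v S_cols unfolding maximal_def by blast
  qed
  then have "span (set (cols B)) \<subseteq> span S"
    using S_carrier by (intro span_is_subset span_is_submodule) auto
  then have span_S: "span S = col_space B"
    unfolding col_space_def using span_is_monotone[OF S_cols] by blast
  have "S \<subseteq> col B ` {..<nc}" using S_cols B by (auto simp: cols_def)
  then obtain I where "I \<subseteq> {..<nc}" "inj_on (col B) I" "S = col B ` I"
    by (auto simp: subset_image_inj)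
  moreover have "card I = rank B"
    using rank_card_indpt[OF B S] card_image \<open>inj_on (col B) I\<close> \<open>S = col B ` I\<close> by metis
  ultimately show ?thesis using that S_indpt span_S by blast
qed

lemma cols_dependent_if_in_span:
  assumes S: "S \<subseteq> carrier_vec n" "finite S" and ws: "set ws \<subseteq> span S" "card S < length ws"
  obtains c where "c \<in> carrier_vec (length ws)" "c \<noteq> 0\<^sub>v (length ws)" "mat_of_cols n ws *\<^sub>v c = 0\<^sub>v n"
proof (cases "distinct ws")
  case False
  then obtain i j where ij: "i < length ws" "j < length ws" "i \<noteq> j" "ws ! i = ws ! j"
    unfolding distinct_conv_nth by blast
  let ?c = "unit_vec (length ws) i - unit_vec (length ws) j :: 'a vec"
  have "?c $ i = 1" using ij by simp
  then have "?c \<noteq> 0\<^sub>v (length ws)" using ij(1) by (metis index_zero_vec(1) zero_neq_one)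
  moreover have "mat_of_cols n ws *\<^sub>v ?c = 0\<^sub>v n"
  proof (rule eq_vecI)
    fix k assume "k < dim_vec (0\<^sub>v n)"
    then show "(mat_of_cols n ws *\<^sub>v ?c) $ k = 0\<^sub>v n $ k"
      using ij by (simp add: mat_of_cols_mult_vec_index unit_vec_def right_diff_distrib sum_subtractf
          if_distrib[of "times _"] del: index_mult_mat_vec cong: if_cong)
  qed simp
  ultimately show ?thesis using that[of ?c] by simp
next
  case True
  have carrier: "set ws \<subseteq> carrier_vec n" using ws(1) span_is_subset2[OF S(1)] by auto
  have "lin_dep (set ws)"
  proof (rule ccontr)
    assume "lin_indpt (set ws)"
    then have "card (set ws) \<le> card S"
      using replacement[OF List.finite_set S(2,1) _ ws(1)] by fastforce
    then show False using distinct_card[OF True] ws(2) by simp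
  qed
  then show ?thesis
    using lin_depE[of "mat_of_cols n ws" "length ws"] that carrier True by (metis cols_mat_of_cols mat_of_cols_carrier(1))
qed

lemma Qop_vanishes_on_col_space:
  assumes B: "A \<xi> \<in> carrier_mat n N" and w: "w \<in> col_space (A \<xi>)"
  shows "Qop n N (rank (A \<xi>)) A \<xi> w = (\<lambda>I idx. 0)"
proof -
  obtain I\<^sub>0 where I\<^sub>0: "card I\<^sub>0 = rank (A \<xi>)" "span (col (A \<xi>) ` I\<^sub>0) = col_space (A \<xi>)"
    "I\<^sub>0 \<subseteq> {..<N}"
    using col_space_basis_of_cols[OF B] by metis
  let ?S = "col (A \<xi>) ` I\<^sub>0"
  have S: "?S \<subseteq> carrier_vec n" "finite ?S" "card ?S \<le> rank (A \<xi>)"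
    using I\<^sub>0 B finite_subset[OF I\<^sub>0(3)] card_image_le[of I\<^sub>0 "col (A \<xi>)"] by auto
  have "set (cols (A \<xi>)) \<subseteq> carrier_vec n" using B cols_dim by blast
  then have "set (cols (A \<xi>)) \<subseteq> span ?S" unfolding I\<^sub>0(2) col_space_def by (rule in_own_span)
  then have cols_span: "col (A \<xi>) i \<in> span ?S" if "i < N" for i
    using that B by (auto simp: cols_def)
  have "Qop n N (rank (A \<xi>)) A \<xi> w I idx = 0" for I idx
  proof (cases "I \<subseteq> {..<N} \<and> card I = rank (A \<xi>) \<and> (\<forall>j\<le>rank (A \<xi>). idx j < n)")
    case True
    let ?ws = "map (\<lambda>i. col (A \<xi>) i) (sorted_list_of_set I) @ [w]"
    have "finite I" using True finite_subset by blast
    then have "set ?ws \<subseteq> span ?S" "length ?ws = Suc (rank (A \<xi>))"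
      using True cols_span w I\<^sub>0(2) by auto
    then obtain c where "c \<in> carrier_vec (length ?ws)" "c \<noteq> 0\<^sub>v (length ?ws)"
      "mat_of_cols n ?ws *\<^sub>v c = 0\<^sub>v n"
      using cols_dependent_if_in_span[OF S(1,2)] S(3) by (metis less_Suc_eq_le)
    then have "wedge ?ws idx = 0"
      using True \<open>length ?ws = _\<close> by (intro wedge_eq_0_if_cols_dependent) (auto simp: less_Suc_eq_le)
    then show ?thesis unfolding Qop_def by simp
  qed (auto simp: Qop_def)
  then show ?thesis by blast
qed

lemma Qop_nonzero_off_col_space:
  assumes B: "A \<xi> \<in> carrier_mat n N" and w: "w \<in> carrier_vec n" "w \<notin> col_space (A \<xi>)"
  shows "Qop n N (rank (A \<xi>)) A \<xi> w \<noteq> (\<lambda>I idx. 0)"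
proof -
  obtain I where I: "I \<subseteq> {..<N}" "card I = rank (A \<xi>)" "inj_on (col (A \<xi>)) I"
    "lin_indpt (col (A \<xi>) ` I)" "span (col (A \<xi>) ` I) = col_space (A \<xi>)"
    using col_space_basis_of_cols[OF B] by blast
  let ?S = "col (A \<xi>) ` I" and ?r = "rank (A \<xi>)"
  let ?ws = "map (\<lambda>i. col (A \<xi>) i) (sorted_list_of_set I) @ [w]"
  have "finite I" using I(1) finite_subset by blast
  have S: "?S \<subseteq> carrier_vec n" using I(1) B by auto
  have "w \<notin> ?S" using w(2) I(5) in_own_span[OF S] by auto
  have ws: "set ?ws = ?S \<union> {w}" "distinct ?ws" "length ?ws = Suc ?r"
    using \<open>finite I\<close> I(2,3) \<open>w \<notin> ?S\<close> by (auto simp: distinct_map)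
  have "lin_indpt (set ?ws)"
    unfolding ws(1) using lin_dep_iff_in_span[OF S I(4) w(1) \<open>w \<notin> ?S\<close>] w(2) I(5) by simp
  moreover have "set ?ws \<subseteq> carrier_vec n" using ws(1) S w(1) by auto
  ultimately have "c = 0\<^sub>v (length ?ws)"
    if "c \<in> carrier_vec (length ?ws)" "mat_of_cols n ?ws *\<^sub>v c = 0\<^sub>v n" for c
    using lin_depI[OF mat_of_cols_carrier(1) that(1) _ that(2)] ws(2) by auto
  then obtain idx where idx: "\<forall>j<length ?ws. idx j < n" "wedge ?ws idx \<noteq> 0"
    using wedge_ne_0_if_cols_independent by blast
  define idx' where "idx' j = (if j \<le> ?r then idx j else 0)" for j
  have "wedge ?ws idx' = wedge ?ws idx"
    using ws(3) by (intro wedge_cong) (simp add: idx'_def)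
  then have "Qop n N ?r A \<xi> w I idx' \<noteq> 0"
    using I(1,2) idx ws(3) unfolding Qop_def by (auto simp: idx'_def)
  then show ?thesis by metis
qed

lemma image_eq_kernel_Qop:
  assumes B: "A \<xi> \<in> carrier_mat n N"
  shows "{A \<xi> *\<^sub>v v | v. v \<in> carrier_vec N} =
    {w \<in> carrier_vec n. Qop n N (rank (A \<xi>)) A \<xi> w = (\<lambda>I idx. 0)}"
proof -
  have "col_space (A \<xi>) = {A \<xi> *\<^sub>v v | v. v \<in> carrier_vec N}"
    using col_space_eq[OF B] B by auto
  moreover have "col_space (A \<xi>) \<subseteq> carrier_vec n"
    using col_space_eq[OF B] B by auto
  ultimately show ?thesis
    using Qop_vanishes_on_col_space[of A \<xi> N] Qop_nonzero_off_col_space[of A \<xi> N] B by blast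
qed

end

theorem lemma2p1:
  fixes A :: "'a::field vec \<Rightarrow> 'a mat" and d k M N r :: nat
  assumes char: "(2::'a) \<noteq> 0"
    and d: "d \<ge> 1"
    and symb: "hom_symbol d k M N A"
    and rank: "\<forall>\<xi>\<in>carrier_vec d. \<xi> \<noteq> 0\<^sub>v d \<longrightarrow> vec_space.rank M (A \<xi>) = r"
  shows "(\<exists>k'. hom_symbol_X d k' M (Qop M N r A))
       \<and> (r < M \<longrightarrow> hom_symbol_X d (r * k) M (Qop M N r A))
       \<and> (r = M \<longrightarrow> (\<forall>\<xi>\<in>carrier_vec d. \<forall>w\<in>carrier_vec M. Qop M N r A \<xi> w = (\<lambda>I idx. 0)))
       \<and> (\<forall>\<xi>\<in>carrier_vec d. \<xi> \<noteq> 0\<^sub>v d \<longrightarrow>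
            {A \<xi> *\<^sub>v v | v. v \<in> carrier_vec N} = {w \<in> carrier_vec M. Qop M N r A \<xi> w = (\<lambda>I idx. 0)})"
proof -
  have carrier: "A \<xi> \<in> carrier_mat M N" if "\<xi> \<in> carrier_vec d" for \<xi>
    using symb that unfolding hom_symbol_def by auto
  have "hom_symbol_X d (r * k) M (Qop M N r A)"
    by (rule hom_symbol_X_Qop[OF symb])
  moreover have "{A \<xi> *\<^sub>v v | v. v \<in> carrier_vec N} = {w \<in> carrier_vec M. Qop M N r A \<xi> w = (\<lambda>I idx. 0)}"
    if "\<xi> \<in> carrier_vec d" "\<xi> \<noteq> 0\<^sub>v d" for \<xi>
    using vec_space.image_eq_kernel_Qop[of A \<xi> M N] carrier rank that by simp
  ultimately show ?thesis using Qop_eq_0_if_rank_eq_dim by blast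
qed

end
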